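(* The family $\{\varphi_{[1],0}[\cdot-2l]\}_{l=0}^{N/2-1}\cup\{\varphi_{[1],1}[\cdot-2l]\}_{l=0}^{N/2-1}$ is an orthonormal basis of $\Pi[N]$. Consequently, for $\mu\in\{0,1\}$, letting $\mathcal C^{\mu}$ be the linear span of $\{\varphi_{[1],\mu}[\cdot-2l]\}_{l=0}^{N/2-1}$, the space $\mathcal C^{1}$ is the orthogonal complement of $\mathcal C^{0}$ in $\Pi[N]$, and the orthogonal projection of any $x\in\Pi[N]$ onto $\mathcal C^{\mu}$ is $$x^{\mu}[k]=\sum_{l=0}^{N/2-1}c^{\mu}[l]\,\varphi_{[1],\mu}[k-2l],\qquad c^{\mu}[l]=\langle x,\varphi_{[1],\mu}[\cdot-2l]\rangle=\sum_{k=0}^{N-1}\varphi_{[1],\mu}[k-2l]\,x[k].$$ Here the DFTs are explicitly $\hat\varphi_{[1],0}[n]=-i\beta[n]$ ($0<n<N/2$), $i\beta[n]$ ($N/2<n<N$), $\sqrt2$ ($n=0$), $0$ ($n=N/2$); and $\hat\varphi_{[1],1}[n]=-i\alpha[n]$ ($0<n<N/2$), $i\alpha[n]$ ($N/2<n<N$), $0$ ($n=0$), $-\sqrt2$ ($n=N/2$).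
   Context: Let $N=2^{J}$ with $J\ge 1$ an integer and $\omega=e^{2\pi i/N}$. $\Pi[N]$ denotes the real vector space of real-valued $N$-periodic sequences $x=\{x[k]\}_{k\in\mathbb Z}$, with inner product $\langle x,y\rangle=\sum_{k=0}^{N-1}x[k]y[k]$. The DFT of an $N$-periodic sequence is $\hat x[n]=\sum_{k=0}^{N-1}x[k]\omega^{-kn}$, with inverse $x[k]=\frac1N\sum_{n=0}^{N-1}\hat x[n]\omega^{kn}$. Fix an integer $r\ge1$; let $U[n]=\tfrac12\big(\cos^{4r}\tfrac{\pi n}{N}+\sin^{4r}\tfrac{\pi n}{N}\big)$, $\beta[n]=\cos^{2r}\tfrac{\pi n}{N}/\sqrt{U[n]}$, $\alpha[n]=\omega^{n}\sin^{2r}\tfrac{\pi n}{N}/\sqrt{U[n]}$. The first-level wavelet packets $\psi_{[1],0},\psi_{[1],1}\in\Pi[N]$ have DFTs $\hat\psi_{[1],0}=\beta$, $\hat\psi_{[1],1}=\alpha$. Known fact (may be assumed): $\{\psi_{[1],\mu}[\cdot-2l]:\mu\in\{0,1\},\,0\le l<N/2\}$ is an orthonormal basis of $\Pi[N]$. The complementary wavelet packets $\varphi_{[1],\mu}\in\Pi[N]$ are defined by DFT $\hat\varphi_{[1],\mu}[n]=-i\hat\psi_{[1],\mu}[n]$ for $0<n<N/2$, $=i\hat\psi_{[1],\mu}[n]$ for $N/2<n<N$, and $=\hat\psi_{[1],\mu}[n]$ for $n\in\{0,N/2\}$ (indices mod $N$). *)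

theory Defs
  imports "HOL-Analysis.Analysis"
begin

text \<open>Real-valued sequences indexed by the integers; Pi[N] = the N-periodic ones.\<close>

definition periodic_seq :: "nat \<Rightarrow> (int \<Rightarrow> real) \<Rightarrow> bool" where
  "periodic_seq N x \<longleftrightarrow> (\<forall>k. x (k + int N) = x k)"

definition ipN :: "nat \<Rightarrow> (int \<Rightarrow> real) \<Rightarrow> (int \<Rightarrow> real) \<Rightarrow> real" where
  "ipN N x y = (\<Sum>k<N. x (int k) * y (int k))"

definition dft :: "nat \<Rightarrow> (int \<Rightarrow> real) \<Rightarrow> int \<Rightarrow> complex" where
  "dft N x n = (\<Sum>k<N. complex_of_real (x (int k)) * cis (- 2 * pi * real k * real_of_int n / real N))"

definition U_fun :: "nat \<Rightarrow> nat \<Rightarrow> int \<Rightarrow> real" where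
  "U_fun r N n = (cos (pi * real_of_int n / real N) ^ (4*r) + sin (pi * real_of_int n / real N) ^ (4*r)) / 2"

definition beta_fun :: "nat \<Rightarrow> nat \<Rightarrow> int \<Rightarrow> complex" where
  "beta_fun r N n = complex_of_real (cos (pi * real_of_int n / real N) ^ (2*r) / sqrt (U_fun r N n))"

definition alpha_fun :: "nat \<Rightarrow> nat \<Rightarrow> int \<Rightarrow> complex" where
  "alpha_fun r N n = cis (2 * pi * real_of_int n / real N)
      * complex_of_real (sin (pi * real_of_int n / real N) ^ (2*r) / sqrt (U_fun r N n))"

definition hat_psi :: "nat \<Rightarrow> nat \<Rightarrow> nat \<Rightarrow> int \<Rightarrow> complex" where
  "hat_psi r N \<mu> n = (if \<mu> = 0 then beta_fun r N n else alpha_fun r N n)"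

definition hat_phi :: "nat \<Rightarrow> nat \<Rightarrow> nat \<Rightarrow> int \<Rightarrow> complex" where
  "hat_phi r N \<mu> n =
     (let m = n mod int N in
      if 0 < m \<and> m < int N div 2 then - \<i> * hat_psi r N \<mu> n
      else if int N div 2 < m then \<i> * hat_psi r N \<mu> n
      else hat_psi r N \<mu> n)"

text \<open>Inverse DFT; the sequences are real-valued, and we take the real part so that
  they are elements of the real space Pi[N].\<close>
definition idft_re :: "nat \<Rightarrow> (int \<Rightarrow> complex) \<Rightarrow> int \<Rightarrow> real" where
  "idft_re N X k = Re ((1 / of_nat N) * (\<Sum>n<N. X (int n) * cis (2 * pi * real_of_int k * real n / real N)))"

definition psi1 :: "nat \<Rightarrow> nat \<Rightarrow> nat \<Rightarrow> int \<Rightarrow> real" where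
  "psi1 r N \<mu> = idft_re N (hat_psi r N \<mu>)"

definition phi1 :: "nat \<Rightarrow> nat \<Rightarrow> nat \<Rightarrow> int \<Rightarrow> real" where
  "phi1 r N \<mu> = idft_re N (hat_phi r N \<mu>)"

definition orthonormal_basis_Pi :: "nat \<Rightarrow> 'i set \<Rightarrow> ('i \<Rightarrow> int \<Rightarrow> real) \<Rightarrow> bool" where
  "orthonormal_basis_Pi N I f \<longleftrightarrow>
     (\<forall>i\<in>I. periodic_seq N (f i)) \<and>
     (\<forall>i\<in>I. \<forall>j\<in>I. ipN N (f i) (f j) = (if i = j then 1 else 0)) \<and>
     (\<forall>x. periodic_seq N x \<longrightarrow> (\<exists>c. x = (\<lambda>k. \<Sum>i\<in>I. c i * f i k)))"

definition shift_span :: "nat \<Rightarrow> (int \<Rightarrow> real) \<Rightarrow> (int \<Rightarrow> real) set" where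
  "shift_span N g = {(\<lambda>k. \<Sum>l<N div 2. c l * g (k - 2 * int l)) | c. True}"

definition orth_complement_Pi :: "nat \<Rightarrow> (int \<Rightarrow> real) set \<Rightarrow> (int \<Rightarrow> real) set" where
  "orth_complement_Pi N C = {y. periodic_seq N y \<and> (\<forall>z\<in>C. ipN N y z = 0)}"

definition is_orth_proj :: "nat \<Rightarrow> (int \<Rightarrow> real) set \<Rightarrow> (int \<Rightarrow> real) \<Rightarrow> (int \<Rightarrow> real) \<Rightarrow> bool" where
  "is_orth_proj N C x y \<longleftrightarrow> y \<in> C \<and> (\<forall>z\<in>C. ipN N (\<lambda>k. x k - y k) z = 0)"

end

theory Submission
  imports Defs
begin

text \<open>
  The complementary packets come from the packets by a Fourier multiplier: with H[n] = -i
  for 0 < n < N/2, H[n] = i for N/2 < n < N and H[0] = H[N/2] = 1 (hilbert_mult below) one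
  has hat phi_[1],mu = H hat psi_[1],mu. Since H is Hermitian, the operator
  x \<mapsto> IDFT(H DFT x) maps real N-periodic sequences to real ones, and since |H| = 1 it
  preserves the inner product by Parseval; it commutes with shifts and is invertible (its
  inverse has multiplier cnj H). Hence it carries the orthonormal basis of shifted psi's onto
  the family of shifted phi's, which is therefore an orthonormal basis. The complement and
  projection statements hold for any orthonormal basis split into two families of shifts,
  and the DFT values are read off from hat phi = H hat psi at the four kinds of frequencies.
\<close>

subsection \<open>Roots of unity\<close>

definition unity_root :: "nat \<Rightarrow> int \<Rightarrow> complex" where
  "unity_root N a = cis (2 * pi * real_of_int a / real N)"

lemma unity_root_add: "unity_root N (a + b) = unity_root N a * unity_root N b"
  by (simp add: unity_root_def cis_mult add_divide_distrib distrib_left)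

lemma unity_root_0 [simp]: "unity_root N 0 = 1"
  by (simp add: unity_root_def)

lemma unity_root_uminus: "unity_root N (- a) = cnj (unity_root N a)"
  by (simp add: unity_root_def cis_cnj)

lemma unity_root_mult_diff:
  "unity_root N (a * (b - c)) = unity_root N (a * b) * unity_root N (- (a * c))"
  by (simp add: unity_root_add[symmetric] algebra_simps)

lemma unity_root_power: "unity_root N a ^ k = unity_root N (int k * a)"
  by (induction k) (simp_all add: unity_root_add distrib_right)

lemma unity_root_eq_1_iff:
  assumes "N > 0" shows "unity_root N a = 1 \<longleftrightarrow> int N dvd a"
proof
  assume "unity_root N a = 1"
  then have "cos (2 * pi * real_of_int a / real N) = 1"
    by (metis unity_root_def cis.sel(1) one_complex.simps(1))
  then obtain n :: int where "2 * pi * real_of_int a / real N = real_of_int n * 2 * pi"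
    by (auto simp: cos_one_2pi_int)
  then have "real_of_int a = real_of_int (n * int N)"
    using assms by (simp add: field_simps)
  then show "int N dvd a" by (metis dvd_triv_right of_int_eq_iff)
next
  assume "int N dvd a"
  then obtain j where "a = int N * j" by blast
  then have "2 * pi * real_of_int a / real N = 2 * pi * real_of_int j"
    using assms by (simp add: field_simps)
  then show "unity_root N a = 1" by (simp add: unity_root_def)
qed

lemma unity_root_add_mult:
  assumes "N > 0" shows "unity_root N (a + int N * j) = unity_root N a"
  using unity_root_eq_1_iff[OF assms, of "int N * j"] by (simp add: unity_root_add)

lemma sum_unity_root:
  assumes "N > 0"
  shows "(\<Sum>k<N. unity_root N (int k * m)) = (if int N dvd m then of_nat N else 0)"
proof (cases "int N dvd m")
  case True
  then have "unity_root N (int k * m) = 1" for k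
    using unity_root_eq_1_iff[OF assms] by (simp add: dvd_mult)
  then show ?thesis using True by simp
next
  case False
  then have ne: "unity_root N m \<noteq> 1" using unity_root_eq_1_iff[OF assms] by blast
  have "(\<Sum>k<N. unity_root N (int k * m)) = (\<Sum>k<N. unity_root N m ^ k)"
    by (simp add: unity_root_power)
  also have "\<dots> = (unity_root N m ^ N - 1) / (unity_root N m - 1)"
    using geometric_sum[OF ne] .
  also have "unity_root N m ^ N = 1"
    using unity_root_eq_1_iff[OF assms] by (simp add: unity_root_power)
  finally show ?thesis using False by simp
qed

definition periodic :: "nat \<Rightarrow> (int \<Rightarrow> 'a) \<Rightarrow> bool" where
  "periodic N X \<longleftrightarrow> (\<forall>n. X (n + int N) = X n)"

definition hermitian :: "nat \<Rightarrow> (int \<Rightarrow> complex) \<Rightarrow> bool" where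
  "hermitian N X \<longleftrightarrow> periodic N X \<and> (\<forall>n. X (- n) = cnj (X n))"

lemma periodic_seq_iff_periodic: "periodic_seq N x \<longleftrightarrow> periodic N x"
  by (simp add: periodic_seq_def periodic_def)

lemma periodic_add_mult:
  assumes "periodic N X" shows "X (a + int N * j) = X a"
proof (induction j rule: int_induct[where k = 0])
  case (step1 i)
  then show ?case
    using assms[unfolded periodic_def, rule_format, of "a + int N * i"] by (simp add: algebra_simps)
next
  case (step2 i)
  then show ?case
    using assms[unfolded periodic_def, rule_format, of "a + int N * (i - 1)"]
    by (simp add: algebra_simps)
qed simp

lemma periodic_mod:
  assumes "periodic N X" shows "X (a mod int N) = X a"
  using periodic_add_mult[OF assms, of "a mod int N" "a div int N"] by simp

lemma sum_periodic_uminus: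
  fixes g :: "int \<Rightarrow> 'a::comm_monoid_add"
  assumes "periodic N g"
  shows "(\<Sum>n<N. g (- int n)) = (\<Sum>n<N. g (int n))"
proof -
  define \<sigma> where "\<sigma> n = nat ((- int n) mod int N)" for n
  have \<sigma>: "\<sigma> n < N" "\<sigma> (\<sigma> n) = n" if "n < N" for n
  proof -
    have "(- ((- int n) mod int N)) mod int N = int n"
      using that by (simp add: mod_minus_eq)
    then show "\<sigma> n < N" "\<sigma> (\<sigma> n) = n"
      using that by (simp_all add: \<sigma>_def nat_less_iff)
  qed
  have "(\<Sum>n<N. g (- int n)) = (\<Sum>n<N. g (int (\<sigma> n)))"
    using periodic_mod[OF assms] by (intro sum.cong) (auto simp: \<sigma>_def)
  also have "\<dots> = (\<Sum>n<N. g (int n))"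
    using \<sigma> by (intro sum.reindex_bij_witness[where i = \<sigma> and j = \<sigma>]) auto
  finally show ?thesis .
qed

lemma hermitian_mult:
  "hermitian N A \<Longrightarrow> hermitian N B \<Longrightarrow> hermitian N (\<lambda>n. A n * B n)"
  unfolding hermitian_def periodic_def by simp

lemma hermitian_cnj: "hermitian N M \<Longrightarrow> hermitian N (\<lambda>n. cnj (M n))"
  unfolding hermitian_def periodic_def by simp

lemma hermitian_unity_root:
  assumes "N > 0" shows "hermitian N (\<lambda>n. unity_root N (- (a * n)))"
  unfolding hermitian_def periodic_def
  using unity_root_add_mult[OF assms, of "- (a * _)" "- a"]
  by (simp add: algebra_simps unity_root_uminus[symmetric])

subsection \<open>Inversion of the DFT\<close>

definition idft :: "nat \<Rightarrow> (int \<Rightarrow> complex) \<Rightarrow> int \<Rightarrow> complex" where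
  "idft N X k = (1 / of_nat N) * (\<Sum>n<N. X (int n) * unity_root N (k * int n))"

lemma idft_re_idft: "idft_re N X k = Re (idft N X k)"
  by (simp add: idft_re_def idft_def unity_root_def mult.assoc)

lemma dft_unity_root: "dft N x n = (\<Sum>k<N. of_real (x (int k)) * unity_root N (- (int k * n)))"
  by (simp add: dft_def unity_root_def mult.assoc)

lemma idft_cong:
  "(\<And>n. n < N \<Longrightarrow> X (int n) = Y (int n)) \<Longrightarrow> idft N X k = idft N Y k"
  unfolding idft_def by (metis (no_types, lifting) lessThan_iff sum.cong)

lemma idft_periodic: assumes "N > 0" shows "periodic N (idft N X)"
  using unity_root_add_mult[OF assms, of "_ * int _" "int _"]
  by (simp add: periodic_def idft_def algebra_simps)

lemma idft_shift:
  "idft N X (k - a) = idft N (\<lambda>n. X n * unity_root N (- (a * n))) k"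
proof -
  have "unity_root N ((k - a) * int n) = unity_root N (k * int n) * unity_root N (- (a * int n))"
    for n by (simp add: unity_root_add[symmetric] algebra_simps)
  then show ?thesis unfolding idft_def by (simp add: mult_ac)
qed

lemma of_real_Re_idft:
  assumes "N > 0" "hermitian N X"
  shows "complex_of_real (Re (idft N X k)) = idft N X k"
proof -
  define g where "g j = X j * unity_root N (k * j)" for j
  have "periodic N g"
    using assms unity_root_add_mult[OF assms(1), of "k * _" k]
    unfolding hermitian_def periodic_def g_def by (simp add: algebra_simps)
  moreover have "cnj (g j) = g (- j)" for j
    using assms(2) unfolding g_def hermitian_def by (simp add: unity_root_uminus[symmetric])
  ultimately have "cnj (idft N X k) = idft N X k"
    using sum_periodic_uminus[of N g] by (simp add: idft_def g_def[symmetric])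
  then show ?thesis by (simp add: complex_eq_iff)
qed

lemma dft_hermitian:
  assumes "N > 0" shows "hermitian N (dft N x)"
  using unity_root_add_mult[OF assms, of "- (int _ * _)" "- int _"]
  by (simp add: hermitian_def periodic_def dft_unity_root unity_root_uminus algebra_simps)

lemma sum_unity_root_delta:
  fixes F :: "nat \<Rightarrow> complex"
  assumes "N > 0"
  shows "(\<Sum>j<N. F j * (\<Sum>n<N. unity_root N (int n * (a - int j)))) = of_nat N * F (nat (a mod int N))"
    and "(\<Sum>j<N. F j * (\<Sum>n<N. unity_root N (int n * (int j - a)))) = of_nat N * F (nat (a mod int N))"
proof -
  have dvd: "int N dvd (a - int j) \<longleftrightarrow> j = nat (a mod int N)" if "j < N" for j
    using that mod_eq_dvd_iff[of a "int N" "int j"] by auto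
  have "(\<Sum>j<N. F j * (if j = nat (a mod int N) then of_nat N else 0)) = of_nat N * F (nat (a mod int N))"
    using assms by (simp add: if_distrib[of "(*) _"] nat_less_iff mult.commute cong: if_cong)
  then show "(\<Sum>j<N. F j * (\<Sum>n<N. unity_root N (int n * (a - int j)))) = of_nat N * F (nat (a mod int N))"
    and "(\<Sum>j<N. F j * (\<Sum>n<N. unity_root N (int n * (int j - a)))) = of_nat N * F (nat (a mod int N))"
    using dvd by (auto simp: sum_unity_root[OF assms] dvd_diff_commute[of "int N" a] intro!: sum.cong)
qed

lemma dft_idft:
  assumes "N > 0" "hermitian N X" "0 \<le> n" "n < int N"
  shows "dft N (\<lambda>k. Re (idft N X k)) n = X n"
proof -
  have "dft N (\<lambda>k. Re (idft N X k)) n = (\<Sum>k<N. idft N X (int k) * unity_root N (- (int k * n)))"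
    by (simp add: dft_unity_root of_real_Re_idft[OF assms(1,2)])
  also have "\<dots> = (\<Sum>k<N. \<Sum>j<N. (1 / of_nat N) * (X (int j) * unity_root N (int k * (int j - n))))"
    unfolding idft_def sum_distrib_left sum_distrib_right
    by (intro sum.cong refl) (simp add: unity_root_mult_diff mult_ac)
  also have "\<dots> = (1 / of_nat N) * (\<Sum>j<N. X (int j) * (\<Sum>k<N. unity_root N (int k * (int j - n))))"
    by (subst sum.swap) (simp add: sum_distrib_left)
  finally show ?thesis
    using sum_unity_root_delta(2)[OF assms(1), of "\<lambda>j. X (int j)" n] assms by simp
qed

lemma idft_dft:
  assumes "N > 0" "periodic_seq N x"
  shows "Re (idft N (dft N x) k) = x k"
proof -
  have "idft N (dft N x) k
      = (\<Sum>n<N. \<Sum>j<N. (1 / of_nat N) * (of_real (x (int j)) * unity_root N (int n * (k - int j))))"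
    unfolding idft_def dft_unity_root sum_distrib_left sum_distrib_right
    by (intro sum.cong refl) (simp add: unity_root_mult_diff mult_ac)
  also have "\<dots> = (1 / of_nat N) * (\<Sum>j<N. of_real (x (int j)) * (\<Sum>n<N. unity_root N (int n * (k - int j))))"
    by (subst sum.swap) (simp add: sum_distrib_left)
  also have "\<dots> = of_real (x (k mod int N))"
    using sum_unity_root_delta(1)[OF assms(1), of "\<lambda>j. of_real (x (int j))" k] assms(1) by simp
  finally show ?thesis
    using periodic_mod assms(2) by (simp add: periodic_seq_iff_periodic)
qed

lemma ipN_idft:
  assumes "N > 0" "hermitian N G"
  shows "complex_of_real (ipN N f (\<lambda>k. Re (idft N G k)))
           = (1 / of_nat N) * (\<Sum>j<N. dft N f (int j) * cnj (G (int j)))"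
proof -
  have "complex_of_real (ipN N f (\<lambda>k. Re (idft N G k)))
      = (\<Sum>k<N. of_real (f (int k)) * cnj (idft N G (int k)))"
    unfolding ipN_def of_real_sum of_real_mult
    using of_real_Re_idft[OF assms] by (metis Re_complex_of_real complex_cnj_complex_of_real)
  also have "\<dots> = (\<Sum>k<N. \<Sum>j<N. (1 / of_nat N) * (cnj (G (int j)) * (of_real (f (int k)) * unity_root N (- (int k * int j)))))"
    unfolding idft_def
    by (intro sum.cong refl) (simp add: unity_root_uminus sum_distrib_left mult_ac)
  also have "\<dots> = (1 / of_nat N) * (\<Sum>j<N. dft N f (int j) * cnj (G (int j)))"
    unfolding dft_unity_root sum_distrib_left sum_distrib_right
    by (subst sum.swap) (simp add: mult_ac)
  finally show ?thesis .
qed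

subsection \<open>Fourier multipliers\<close>

definition fourier_mult :: "nat \<Rightarrow> (int \<Rightarrow> complex) \<Rightarrow> (int \<Rightarrow> real) \<Rightarrow> int \<Rightarrow> real" where
  "fourier_mult N M x k = Re (idft N (\<lambda>n. M n * dft N x n) k)"

lemma dft_fourier_mult:
  assumes "N > 0" "hermitian N M" "0 \<le> n" "n < int N"
  shows "dft N (fourier_mult N M x) n = M n * dft N x n"
  using dft_idft[OF assms(1) hermitian_mult[OF assms(2) dft_hermitian[OF assms(1)]] assms(3,4)]
  by (simp add: fourier_mult_def[abs_def])

lemma fourier_mult_periodic: "N > 0 \<Longrightarrow> periodic_seq N (fourier_mult N M x)"
  using idft_periodic by (simp add: periodic_seq_iff_periodic periodic_def fourier_mult_def)

lemma fourier_mult_1: "N > 0 \<Longrightarrow> periodic_seq N x \<Longrightarrow> fourier_mult N (\<lambda>n. 1) x = x"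
  using idft_dft by (auto simp: fourier_mult_def)

lemma fourier_mult_fourier_mult:
  assumes "N > 0" "hermitian N M'"
  shows "fourier_mult N M (fourier_mult N M' x) = fourier_mult N (\<lambda>n. M n * M' n) x"
proof
  fix k
  have "idft N (\<lambda>n. M n * dft N (fourier_mult N M' x) n) k = idft N (\<lambda>n. (M n * M' n) * dft N x n) k"
    by (rule idft_cong) (simp add: dft_fourier_mult[OF assms])
  then show "fourier_mult N M (fourier_mult N M' x) k = fourier_mult N (\<lambda>n. M n * M' n) x k"
    by (simp add: fourier_mult_def)
qed

lemma dft_sum: "dft N (\<lambda>k. \<Sum>i\<in>I. c i * f i k) n = (\<Sum>i\<in>I. of_real (c i) * dft N (f i) n)"
  unfolding dft_def of_real_sum of_real_mult sum_distrib_right sum_distrib_left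
  by (subst sum.swap) (simp add: mult.assoc)

lemma idft_sum: "idft N (\<lambda>n. \<Sum>i\<in>I. a i * X i n) k = (\<Sum>i\<in>I. a i * idft N (X i) k)"
  unfolding idft_def sum_distrib_right sum_distrib_left by (subst sum.swap) (simp add: mult_ac)

lemma fourier_mult_sum:
  "fourier_mult N M (\<lambda>k. \<Sum>i\<in>I. c i * f i k) k = (\<Sum>i\<in>I. c i * fourier_mult N M (f i) k)"
proof -
  have "fourier_mult N M (\<lambda>k. \<Sum>i\<in>I. c i * f i k) k
      = Re (idft N (\<lambda>n. \<Sum>i\<in>I. of_real (c i) * (M n * dft N (f i) n)) k)"
    by (simp add: fourier_mult_def dft_sum sum_distrib_left mult.left_commute)
  then show ?thesis
    by (simp only: idft_sum) (simp add: fourier_mult_def Re_sum)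
qed

lemma ipN_fourier_mult:
  assumes "N > 0" "hermitian N M" "\<And>n. M n * cnj (M n) = 1"
    and "periodic_seq N f" "periodic_seq N g"
  shows "ipN N (fourier_mult N M f) (fourier_mult N M g) = ipN N f g"
proof -
  have "dft N (fourier_mult N M f) (int j) * cnj (M (int j) * dft N g (int j))
      = dft N f (int j) * cnj (dft N g (int j))" if "j < N" for j
  proof -
    have "dft N (fourier_mult N M f) (int j) * cnj (M (int j) * dft N g (int j))
        = (M (int j) * cnj (M (int j))) * (dft N f (int j) * cnj (dft N g (int j)))"
      using dft_fourier_mult[OF assms(1,2)] that by (simp add: mult_ac)
    then show ?thesis by (simp add: assms(3))
  qed
  then have "(\<Sum>j<N. dft N (fourier_mult N M f) (int j) * cnj (M (int j) * dft N g (int j)))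
      = (\<Sum>j<N. dft N f (int j) * cnj (dft N g (int j)))"
    by (intro sum.cong) auto
  moreover have "complex_of_real (ipN N (fourier_mult N M f) (fourier_mult N M g))
      = (1 / of_nat N) * (\<Sum>j<N. dft N (fourier_mult N M f) (int j) * cnj (M (int j) * dft N g (int j)))"
    using ipN_idft[OF assms(1) hermitian_mult[OF assms(2) dft_hermitian[OF assms(1)]]]
    by (simp add: fourier_mult_def[of N M g, abs_def])
  ultimately have "complex_of_real (ipN N (fourier_mult N M f) (fourier_mult N M g))
      = (1 / of_nat N) * (\<Sum>j<N. dft N f (int j) * cnj (dft N g (int j)))"
    by simp
  also have "\<dots> = complex_of_real (ipN N f (\<lambda>k. Re (idft N (dft N g) k)))"
    using ipN_idft[OF assms(1) dft_hermitian[OF assms(1)]] by simp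
  finally show ?thesis
    using idft_dft[OF assms(1,5)] by simp
qed

lemma orthonormal_basis_Pi_fourier_mult:
  assumes "N > 0" "hermitian N M" "\<And>n. M n * cnj (M n) = 1"
    and onb: "orthonormal_basis_Pi N I g"
  shows "orthonormal_basis_Pi N I (\<lambda>i. fourier_mult N M (g i))"
  unfolding orthonormal_basis_Pi_def
proof (intro conjI ballI allI impI)
  show "periodic_seq N (fourier_mult N M (g i))" for i
    using fourier_mult_periodic[OF assms(1)] .
  show "ipN N (fourier_mult N M (g i)) (fourier_mult N M (g j)) = (if i = j then 1 else 0)"
    if "i \<in> I" "j \<in> I" for i j
    using onb that ipN_fourier_mult[OF assms(1-3)] by (simp add: orthonormal_basis_Pi_def)
  fix x assume x: "periodic_seq N x"
  obtain c where c: "fourier_mult N (\<lambda>n. cnj (M n)) x = (\<lambda>k. \<Sum>i\<in>I. c i * g i k)"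
    using onb fourier_mult_periodic[OF assms(1)] unfolding orthonormal_basis_Pi_def by blast
  have "x = fourier_mult N M (fourier_mult N (\<lambda>n. cnj (M n)) x)"
    using fourier_mult_fourier_mult[OF assms(1) hermitian_cnj[OF assms(2)]] fourier_mult_1[OF assms(1) x]
    by (simp add: assms(3))
  also have "\<dots> = (\<lambda>k. \<Sum>i\<in>I. c i * fourier_mult N M (g i) k)"
    unfolding c by (rule ext) (rule fourier_mult_sum)
  finally show "\<exists>c. x = (\<lambda>k. \<Sum>i\<in>I. c i * fourier_mult N M (g i) k)" by blast
qed

lemma fourier_mult_shift_idft:
  assumes "N > 0" "hermitian N M" "hermitian N X"
  shows "fourier_mult N M (\<lambda>k. Re (idft N X (k - a))) = (\<lambda>k. Re (idft N (\<lambda>n. M n * X n) (k - a)))"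
proof
  fix k
  define Xa where "Xa = (\<lambda>n. X n * unity_root N (- (a * n)))"
  have "hermitian N Xa"
    unfolding Xa_def by (rule hermitian_mult[OF assms(3) hermitian_unity_root[OF assms(1)]])
  then have "idft N (\<lambda>n. M n * dft N (\<lambda>k. Re (idft N Xa k)) n) k = idft N (\<lambda>n. M n * Xa n) k"
    by (intro idft_cong) (simp add: dft_idft[OF assms(1)])
  then show "fourier_mult N M (\<lambda>k. Re (idft N X (k - a))) k = Re (idft N (\<lambda>n. M n * X n) (k - a))"
    by (simp add: fourier_mult_def idft_shift Xa_def mult_ac)
qed

subsection \<open>Orthonormal bases made of two families of shifts\<close>

lemma ipN_commute: "ipN N x y = ipN N y x"
  unfolding ipN_def by (simp add: mult.commute)

lemma ipN_sum_left: "ipN N (\<lambda>k. \<Sum>i\<in>L. c i * h i k) z = (\<Sum>i\<in>L. c i * ipN N (h i) z)"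
  unfolding ipN_def sum_distrib_right sum_distrib_left by (subst sum.swap) (simp add: mult.assoc)

lemma ipN_sum_right: "ipN N z (\<lambda>k. \<Sum>i\<in>L. c i * h i k) = (\<Sum>i\<in>L. c i * ipN N z (h i))"
  using ipN_sum_left[of N c h L z] by (simp add: ipN_commute)

lemma ipN_diff_left: "ipN N (\<lambda>k. x k - y k) z = ipN N x z - ipN N y z"
  unfolding ipN_def by (simp add: left_diff_distrib sum_subtractf)

lemma ipN_orthonormal_sum:
  assumes "finite L" "j \<in> L" "\<And>i. i \<in> L \<Longrightarrow> ipN N (h i) (h j) = (if i = j then 1 else 0)"
  shows "ipN N (\<lambda>k. \<Sum>i\<in>L. c i * h i k) (h j) = c j"
proof -
  have "(\<Sum>i\<in>L. c i * ipN N (h i) (h j)) = (\<Sum>i\<in>L. if i = j then c i else 0)"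
    using assms(3) by (intro sum.cong) auto
  then show ?thesis by (simp add: ipN_sum_left assms(1,2))
qed

lemma shift_span_orth_complement:
  fixes g :: "nat \<Rightarrow> int \<Rightarrow> real"
  assumes onb: "orthonormal_basis_Pi N ({0,1} \<times> {..<N div 2}) (\<lambda>(\<mu>, l) k. g \<mu> (k - 2 * int l))"
  shows "shift_span N (g 1) = orth_complement_Pi N (shift_span N (g 0))"
proof -
  define f where "f = (\<lambda>(\<mu>::nat, l::nat) k. g \<mu> (k - 2 * int l))"
  define I where "I = {0::nat, 1} \<times> {..<N div 2}"
  have per: "\<And>i. i \<in> I \<Longrightarrow> periodic_seq N (f i)"
    and orth: "\<And>i j. i \<in> I \<Longrightarrow> j \<in> I \<Longrightarrow> ipN N (f i) (f j) = (if i = j then 1 else 0)"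
    and comp: "\<And>x. periodic_seq N x \<Longrightarrow> \<exists>c. x = (\<lambda>k. \<Sum>i\<in>I. c i * f i k)"
    using onb unfolding orthonormal_basis_Pi_def f_def I_def by blast+
  have span: "shift_span N (g \<mu>) = {(\<lambda>k. \<Sum>l<N div 2. c l * f (\<mu>, l) k) | c. True}" for \<mu>
    by (simp add: shift_span_def f_def)
  show ?thesis
  proof
    show "shift_span N (g 1) \<subseteq> orth_complement_Pi N (shift_span N (g 0))"
    proof
      fix y assume "y \<in> shift_span N (g 1)"
      then obtain c where c: "y = (\<lambda>k. \<Sum>l<N div 2. c l * f (1, l) k)" by (auto simp: span)
      have "periodic_seq N y"
        using per by (simp add: c periodic_seq_def I_def)
      moreover have "ipN N y z = 0" if "z \<in> shift_span N (g 0)" for z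
        using that by (auto simp: span c ipN_sum_left ipN_sum_right orth I_def)
      ultimately show "y \<in> orth_complement_Pi N (shift_span N (g 0))"
        by (simp add: orth_complement_Pi_def)
    qed
    show "orth_complement_Pi N (shift_span N (g 0)) \<subseteq> shift_span N (g 1)"
    proof
      fix y assume "y \<in> orth_complement_Pi N (shift_span N (g 0))"
      then have "periodic_seq N y" and y0: "\<And>z. z \<in> shift_span N (g 0) \<Longrightarrow> ipN N y z = 0"
        unfolding orth_complement_Pi_def by auto
      then obtain c where c: "y = (\<lambda>k. \<Sum>i\<in>I. c i * f i k)" using comp by blast
      have "c (0, l) = 0" if "l < N div 2" for l
      proof -
        have "f (0, l) \<in> shift_span N (g 0)"
          unfolding span using that
          by (auto intro!: exI[of _ "\<lambda>l'. of_bool (l' = l)"])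
        then show ?thesis
          using y0 ipN_orthonormal_sum[of I "(0, l)" N f c] orth that by (simp add: c I_def)
      qed
      then have "y = (\<lambda>k. \<Sum>l<N div 2. c (1, l) * f (1, l) k)"
        by (simp add: c I_def sum.cartesian_product')
      then show "y \<in> shift_span N (g 1)" unfolding span by (auto intro!: exI[of _ "\<lambda>l. c (1, l)"])
    qed
  qed
qed

lemma is_orth_proj_shift_span:
  assumes orth: "\<And>l l'. l < N div 2 \<Longrightarrow> l' < N div 2 \<Longrightarrow>
      ipN N (\<lambda>k. g (k - 2 * int l)) (\<lambda>k. g (k - 2 * int l')) = (if l = l' then 1 else 0)"
  shows "is_orth_proj N (shift_span N g) x
           (\<lambda>k. \<Sum>l<N div 2. (\<Sum>j<N. g (int j - 2 * int l) * x (int j)) * g (k - 2 * int l))"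
proof -
  define f where "f l = (\<lambda>k. g (k - 2 * int l))" for l
  define c where "c l = ipN N (f l) x" for l
  have proj_eq: "(\<lambda>k. \<Sum>l<N div 2. (\<Sum>j<N. g (int j - 2 * int l) * x (int j)) * g (k - 2 * int l))
      = (\<lambda>k. \<Sum>l<N div 2. c l * f l k)"
    by (simp add: c_def f_def ipN_def)
  have "ipN N (\<lambda>k. x k - (\<Sum>l<N div 2. c l * f l k)) (f l') = 0" if "l' < N div 2" for l'
    using ipN_orthonormal_sum[of "{..<N div 2}" l' N f c] orth that
    by (simp add: ipN_diff_left c_def f_def ipN_commute)
  then show ?thesis
    unfolding proj_eq is_orth_proj_def shift_span_def f_def
    by (auto simp: ipN_sum_right[where h = f, unfolded f_def])
qed

subsection \<open>The Hilbert multiplier and the complementary wavelet packets\<close>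

definition hilbert_mult :: "nat \<Rightarrow> int \<Rightarrow> complex" where
  "hilbert_mult N n =
     (let m = n mod int N in
      if 0 < m \<and> m < int N div 2 then - \<i> else if int N div 2 < m then \<i> else 1)"

lemma hat_phi_eq: "hat_phi r N \<mu> n = hilbert_mult N n * hat_psi r N \<mu> n"
  by (simp add: hat_phi_def hilbert_mult_def Let_def)

lemma hilbert_mult_unimodular: "hilbert_mult N n * cnj (hilbert_mult N n) = 1"
  by (simp add: hilbert_mult_def Let_def)

lemma hermitian_hilbert_mult:
  assumes "N > 0" "even N" shows "hermitian N (hilbert_mult N)"
proof -
  obtain h where h: "N = 2 * h" using assms(2) by blast
  have "hilbert_mult N (- n) = cnj (hilbert_mult N n)" for n
  proof -
    have "0 \<le> n mod int N" "n mod int N < int N" using assms(1) by simp_all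
    then show ?thesis
      by (simp add: hilbert_mult_def Let_def zmod_zminus1_eq_if h)
  qed
  then show ?thesis by (simp add: hermitian_def periodic_def hilbert_mult_def)
qed

lemma cos_sin_shift_half_period:
  assumes "N > 0"
  shows "cos (pi * real_of_int (n + int N) / real N) = - cos (pi * real_of_int n / real N)"
    and "sin (pi * real_of_int (n + int N) / real N) = - sin (pi * real_of_int n / real N)"
  using assms by (simp_all add: add_divide_distrib distrib_left cos_periodic_pi sin_periodic_pi)

lemma hermitian_hat_psi:
  assumes "N > 0" shows "hermitian N (hat_psi r N \<mu>)"
proof -
  have even_pow: "(- x) ^ (2 * k) = (x::real) ^ (2 * k)" for x k
    by (simp add: power_mult)
  have four: "4 * r = 2 * (2 * r)" by simp
  have U: "U_fun r N (n + int N) = U_fun r N n" "U_fun r N (- n) = U_fun r N n" for n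
    unfolding U_fun_def cos_sin_shift_half_period[OF assms] four by (simp_all add: even_pow)
  have "unity_root N (n + int N) = unity_root N n" for n
    using unity_root_add_mult[OF assms, of n 1] by simp
  then have "alpha_fun r N (n + int N) = alpha_fun r N n" "beta_fun r N (n + int N) = beta_fun r N n"
    "alpha_fun r N (- n) = cnj (alpha_fun r N n)" "beta_fun r N (- n) = cnj (beta_fun r N n)" for n
    unfolding alpha_fun_def beta_fun_def U unity_root_def[symmetric] cos_sin_shift_half_period[OF assms]
    by (simp_all add: even_pow unity_root_uminus[symmetric])
  then show ?thesis by (simp add: hermitian_def periodic_def hat_psi_def)
qed

lemma fourier_mult_hilbert_shift_psi1:
  assumes "N > 0" "even N"
  shows "fourier_mult N (hilbert_mult N) (\<lambda>k. psi1 r N \<mu> (k - a)) = (\<lambda>k. phi1 r N \<mu> (k - a))"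
  using fourier_mult_shift_idft[OF assms(1) hermitian_hilbert_mult[OF assms] hermitian_hat_psi[OF assms(1)]]
  by (simp add: psi1_def phi1_def idft_re_idft hat_phi_eq[abs_def])

lemma dft_phi1:
  assumes "N > 0" "even N" "0 \<le> n" "n < int N"
  shows "dft N (phi1 r N \<mu>) n = hat_phi r N \<mu> n"
proof -
  have "hermitian N (hat_phi r N \<mu>)"
    using hermitian_mult[OF hermitian_hilbert_mult[OF assms(1,2)] hermitian_hat_psi[OF assms(1)]]
    by (simp add: hat_phi_eq[abs_def])
  then show ?thesis
    using dft_idft[OF assms(1) _ assms(3,4)] by (simp add: phi1_def idft_re_idft[abs_def])
qed

lemma beta_alpha_0_half:
  assumes "r \<ge> 1" "N > 0" "even N"
  shows "beta_fun r N 0 = sqrt 2" "beta_fun r N (int N div 2) = 0"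
    and "alpha_fun r N 0 = 0" "alpha_fun r N (int N div 2) = - sqrt 2"
proof -
  have angle: "pi * real_of_int (int N div 2) / real N = pi / 2"
    "2 * pi * real_of_int (int N div 2) / real N = pi"
    using assms(2,3) by (auto elim!: evenE simp: field_simps)
  have U: "U_fun r N 0 = 1/2" "U_fun r N (int N div 2) = 1/2"
    using assms(1) by (simp_all add: U_fun_def angle)
  show "beta_fun r N 0 = sqrt 2" "beta_fun r N (int N div 2) = 0"
    "alpha_fun r N 0 = 0" "alpha_fun r N (int N div 2) = - sqrt 2"
    using assms(1) unfolding beta_fun_def alpha_fun_def angle U
    by (simp_all add: real_sqrt_divide)
qed

lemma dft_phi1_explicit:
  assumes "r \<ge> 1" "N > 0" "even N" "0 \<le> n" "n < int N"
  shows "dft N (phi1 r N 0) n =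
           (if 0 < n \<and> n < int N div 2 then - \<i> * beta_fun r N n
            else if int N div 2 < n then \<i> * beta_fun r N n
            else if n = 0 then complex_of_real (sqrt 2) else 0)" (is "_ = ?\<beta>")
    and "dft N (phi1 r N 1) n =
           (if 0 < n \<and> n < int N div 2 then - \<i> * alpha_fun r N n
            else if int N div 2 < n then \<i> * alpha_fun r N n
            else if n = 0 then 0 else - complex_of_real (sqrt 2))" (is "_ = ?\<alpha>")
proof -
  have "\<not> (0 < n \<and> n < int N div 2) \<Longrightarrow> \<not> int N div 2 < n \<Longrightarrow> n \<noteq> 0 \<Longrightarrow> n = int N div 2"
    using assms(4) by linarith
  then show "dft N (phi1 r N 0) n = ?\<beta>" and "dft N (phi1 r N 1) n = ?\<alpha>"
    using assms beta_alpha_0_half[OF assms(1-3)]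
    by (auto simp: dft_phi1 hat_phi_def hat_psi_def Let_def)
qed

theorem proposition4p1:
  fixes J r N :: nat
  assumes "J \<ge> 1" and "r \<ge> 1" and "N = 2 ^ J"
    and psi_onb: "orthonormal_basis_Pi N ({0,1} \<times> {..<N div 2})
                    (\<lambda>(\<mu>, l) k. psi1 r N \<mu> (k - 2 * int l))"
  shows "orthonormal_basis_Pi N ({0,1} \<times> {..<N div 2})
           (\<lambda>(\<mu>, l) k. phi1 r N \<mu> (k - 2 * int l))
    \<and> shift_span N (phi1 r N 1) = orth_complement_Pi N (shift_span N (phi1 r N 0))
    \<and> (\<forall>\<mu>\<in>{0,1}. \<forall>x. periodic_seq N x \<longrightarrow>
           is_orth_proj N (shift_span N (phi1 r N \<mu>)) x
             (\<lambda>k. \<Sum>l<N div 2. (\<Sum>j<N. phi1 r N \<mu> (int j - 2 * int l) * x (int j))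
                                  * phi1 r N \<mu> (k - 2 * int l)))
    \<and> (\<forall>n. 0 \<le> n \<and> n < int N \<longrightarrow> dft N (phi1 r N 0) n =
           (if 0 < n \<and> n < int N div 2 then - \<i> * beta_fun r N n
            else if int N div 2 < n then \<i> * beta_fun r N n
            else if n = 0 then complex_of_real (sqrt 2) else 0))
    \<and> (\<forall>n. 0 \<le> n \<and> n < int N \<longrightarrow> dft N (phi1 r N 1) n =
           (if 0 < n \<and> n < int N div 2 then - \<i> * alpha_fun r N n
            else if int N div 2 < n then \<i> * alpha_fun r N n
            else if n = 0 then 0 else - complex_of_real (sqrt 2)))"
proof -
  have N: "N > 0" "even N" using assms(1,3) by simp_all
  have "(\<lambda>(\<mu>, l). fourier_mult N (hilbert_mult N) (\<lambda>k. psi1 r N \<mu> (k - 2 * int l)))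
      = (\<lambda>(\<mu>, l) k. phi1 r N \<mu> (k - 2 * int l))"
    by (simp add: fourier_mult_hilbert_shift_psi1[OF N])
  then have phi_onb: "orthonormal_basis_Pi N ({0,1} \<times> {..<N div 2})
                        (\<lambda>(\<mu>, l) k. phi1 r N \<mu> (k - 2 * int l))"
    using orthonormal_basis_Pi_fourier_mult[OF N(1) hermitian_hilbert_mult[OF N]
        hilbert_mult_unimodular psi_onb]
    by (simp add: case_prod_unfold)
  have "is_orth_proj N (shift_span N (phi1 r N \<mu>)) x
          (\<lambda>k. \<Sum>l<N div 2. (\<Sum>j<N. phi1 r N \<mu> (int j - 2 * int l) * x (int j))
                               * phi1 r N \<mu> (k - 2 * int l))" if "\<mu> \<in> {0,1}" for \<mu> x
    using phi_onb that by (intro is_orth_proj_shift_span) (auto simp: orthonormal_basis_Pi_def)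
  then show ?thesis
    using phi_onb shift_span_orth_complement[OF phi_onb] dft_phi1_explicit[OF assms(2) N] by blast
qed

end
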